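(* Let $P,Q,R$ be trigonometric polynomials on $\mathbb{R}^2$ (i.e. finite sums $\sum_k c_ke^{2\pi ik\cdot x}$, $k\in\mathbb{Z}^2$). Let $m:\mathbb{R}^2\times\mathbb{R}^2\to\mathbb{C}$ be continuous at every point of $\mathbb{Z}^2\times\mathbb{Z}^2$ and satisfy $m(\xi_1,\xi_2)=O(\exp|(\xi_1,\xi_2)|)$; let $\pi$ be the bilinear multiplier operator with symbol $m$ and $\tilde\pi$ its periodization. For $\delta>0$ let $w_\delta(y)=e^{-\pi\delta|y|^2}$, $y\in\mathbb{R}^2$. Then whenever $\alpha,\beta,\gamma>0$ with $\alpha+\beta+\gamma=1$, $$\lim_{\varepsilon\to0}\varepsilon\int_{\mathbb{R}^2}\pi(Pw_{\alpha\varepsilon},Qw_{\beta\varepsilon})(x)\overline{R(x)}\,w_{\gamma\varepsilon}(x)\,dx=\int_{[-1/2,1/2]^2}\tilde\pi(P,Q)(x)\overline{R(x)}\,dx.$$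
   Context: Fourier transform on $\mathbb{R}^2$: $\hat f(\xi)=\int_{\mathbb{R}^2}f(x)e^{-2\pi ix\cdot\xi}dx$. The bilinear multiplier operator with symbol $m$ is $\pi(f,g)(x)=\int_{\mathbb{R}^2}\int_{\mathbb{R}^2}m(\xi_1,\xi_2)\hat f(\xi_1)\hat g(\xi_2)e^{2\pi i(\xi_1+\xi_2)\cdot x}d\xi_1d\xi_2$. Its periodization acts on functions on $\mathbb{T}^2=\mathbb{R}^2/\mathbb{Z}^2$ by $\tilde\pi(f,g)(x)=\sum_{n_1,n_2\in\mathbb{Z}^2}m(n_1,n_2)\hat f(n_1)\hat g(n_2)e^{2\pi ix\cdot(n_1+n_2)}$, where $\hat f(n)=\int_{\mathbb{T}^2}f(x)e^{-2\pi in\cdot x}dx$. *)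

theory Defs
  imports "HOL-Analysis.Analysis"
begin

definition Zsq :: "(real^2) set" where
  "Zsq = {k. \<forall>i. k $ i \<in> \<int>}"

definition echar :: "real \<Rightarrow> complex" where
  "echar t = exp (complex_of_real (2 * pi * t) * \<i>)"

definition trig_poly :: "(real^2 \<Rightarrow> complex) \<Rightarrow> bool" where
  "trig_poly P \<longleftrightarrow> (\<exists>K c. finite K \<and> K \<subseteq> Zsq \<and>
       (\<forall>x. P x = (\<Sum>k\<in>K. c k * echar (k \<bullet> x))))"

definition fourierR :: "(real^2 \<Rightarrow> complex) \<Rightarrow> real^2 \<Rightarrow> complex" where
  "fourierR f \<xi> = (LINT x|lborel. f x * echar (- (x \<bullet> \<xi>)))"

definition bilin_mult ::
  "((real^2) \<times> (real^2) \<Rightarrow> complex) \<Rightarrow> (real^2 \<Rightarrow> complex) \<Rightarrow> (real^2 \<Rightarrow> complex)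
     \<Rightarrow> real^2 \<Rightarrow> complex" where
  "bilin_mult m f g x =
     (LINT \<xi>1|lborel. LINT \<xi>2|lborel.
        m (\<xi>1, \<xi>2) * fourierR f \<xi>1 * fourierR g \<xi>2 * echar ((\<xi>1 + \<xi>2) \<bullet> x))"

definition fourierT :: "(real^2 \<Rightarrow> complex) \<Rightarrow> real^2 \<Rightarrow> complex" where
  "fourierT f n = (LINT x:cbox 0 (vec 1)|lborel. f x * echar (- (n \<bullet> x)))"

definition periodization ::
  "((real^2) \<times> (real^2) \<Rightarrow> complex) \<Rightarrow> (real^2 \<Rightarrow> complex) \<Rightarrow> (real^2 \<Rightarrow> complex)
     \<Rightarrow> real^2 \<Rightarrow> complex" where
  "periodization m f g x =
     (\<Sum>\<^sub>\<infinity>(n1, n2)\<in>Zsq \<times> Zsq.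
        m (n1, n2) * fourierT f n1 * fourierT g n2 * echar ((n1 + n2) \<bullet> x))"

definition gw :: "real \<Rightarrow> real^2 \<Rightarrow> complex" where
  "gw \<delta> y = complex_of_real (exp (- pi * \<delta> * (norm y)\<^sup>2))"

end

(*
  Write P, Q and R as finite sums of characters e(k.x). Both sides of the limit then become
  finite sums over frequency triples (n1, n2, k3) weighted by a(n1) b(n2) cnj(c(k3)).

  On the torus, orthogonality of the characters on a unit cube keeps exactly the triples with
  k3 = n1 + n2, each with weight m(n1, n2).

  On R^2, the Fourier transform of w_delta is the Gaussian exp(-pi |xi|^2 / delta) / delta, so by
  Fubini a triple contributes the integral of m against three Gaussians of widths proportional to
  sqrt(alpha eps), sqrt(beta eps), sqrt(gamma eps), centred on xi1 = n1, xi2 = n2 and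
  xi1 + xi2 = k3. Rescaling by sqrt eps and dominated convergence (Gaussian decay absorbs the
  exponential growth of m) show that eps times this integral tends to 0 if k3 <> n1 + n2, and
  otherwise to m(n1, n2) times the integral of the three unscaled Gaussians. Transforming back,
  that integral is the integral of w_alpha w_beta w_gamma = w_1, which is 1 as alpha + beta + gamma = 1.
*)

theory Submission
  imports Defs "HOL-Probability.Probability"
begin

section \<open>Affine changes of variables\<close>

lemma nn_integral_lborel_affine:
  fixes f :: "'a::euclidean_space \<Rightarrow> ennreal"
  assumes "f \<in> borel_measurable borel" and "c \<noteq> 0"
  shows "(\<integral>\<^sup>+x. f x \<partial>lborel) = ennreal (\<bar>c\<bar> ^ DIM('a)) * (\<integral>\<^sup>+x. f (t + c *\<^sub>R x) \<partial>lborel)"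
  using assms
  by (subst lborel_affine[OF assms(2), of t]) (simp add: nn_integral_density nn_integral_distr nn_integral_cmult)

lemma lborel_integrable_affine:
  fixes f :: "'a::euclidean_space \<Rightarrow> 'b::{banach, second_countable_topology}"
  assumes f: "integrable lborel f" and c: "c \<noteq> 0"
  shows "integrable lborel (\<lambda>x. f (t + c *\<^sub>R x))"
  using f f[THEN borel_measurable_integrable] unfolding integrable_iff_bounded
  by (subst (asm) nn_integral_lborel_affine[where c=c and t=t]) (auto simp: c ennreal_mult_less_top)

lemma lborel_integrable_affine_iff:
  fixes f :: "'a::euclidean_space \<Rightarrow> 'b::{banach, second_countable_topology}"
  assumes "c \<noteq> 0"
  shows "integrable lborel (\<lambda>x. f (t + c *\<^sub>R x)) \<longleftrightarrow> integrable lborel f"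
  using lborel_integrable_affine[of f c t]
    lborel_integrable_affine[of "\<lambda>x. f (t + c *\<^sub>R x)" "1/c" "-t/\<^sub>R c"] assms
  by (auto simp: algebra_simps)

lemma lborel_integral_affine:
  fixes f :: "'a::euclidean_space \<Rightarrow> 'b::{banach, second_countable_topology}"
  assumes c: "c \<noteq> 0"
  shows "(\<integral>x. f x \<partial>lborel) = \<bar>c\<bar> ^ DIM('a) *\<^sub>R (\<integral>x. f (t + c *\<^sub>R x) \<partial>lborel)"
proof cases
  assume f[measurable]: "integrable lborel f"
  then show ?thesis
    using c f[THEN borel_measurable_integrable] lborel_integrable_affine[OF f c, of t]
    by (subst lborel_affine[OF c, of t]) (simp add: integral_density integral_distr)
next
  assume "\<not> integrable lborel f"
  with c show ?thesis
    by (simp add: lborel_integrable_affine_iff not_integrable_integral_eq)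
qed

section \<open>Characters and Gaussian Fourier transforms\<close>

lemma echar_add: "echar (a + b) = echar a * echar b"
  unfolding echar_def by (simp add: distrib_left distrib_right exp_add[symmetric])

lemma echar_minus: "echar (- a) = cnj (echar a)"
  unfolding echar_def by (simp add: exp_cnj)

lemma norm_echar [simp]: "norm (echar a) = 1"
  unfolding echar_def by (simp add: norm_exp_i_times)

lemma echar_0 [simp]: "echar 0 = 1"
  unfolding echar_def by simp

lemma echar_Ints: "n \<in> \<int> \<Longrightarrow> echar n = 1"
  unfolding echar_def using cis_multiple_2pi[of n] cis_conv_exp[of "2 * pi * n"]
  by (simp add: mult.commute)

lemma echar_sum: "finite A \<Longrightarrow> echar (\<Sum>i\<in>A. f i) = (\<Prod>i\<in>A. echar (f i))"
  by (induction A rule: finite_induct) (auto simp: echar_add)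

lemma continuous_on_echar [continuous_intros]:
  "continuous_on S f \<Longrightarrow> continuous_on S (\<lambda>x. echar (f x))"
  unfolding echar_def by (intro continuous_intros)

lemma has_bochner_integral_std_normal_iexp:
  "has_bochner_integral lborel (\<lambda>x. std_normal_density x *\<^sub>R iexp (\<theta> * x))
     (complex_of_real (exp (- \<theta>\<^sup>2 / 2)))"
proof -
  have "integrable lborel (\<lambda>x. std_normal_density x *\<^sub>R iexp (\<theta> * x))"
  proof (rule Bochner_Integration.integrable_bound)
    show "integrable lborel std_normal_density"
      using integrable_std_normal_moment[of 0] by simp
    show "AE x in lborel. norm (std_normal_density x *\<^sub>R iexp (\<theta> * x)) \<le> norm (std_normal_density x)"
      by (simp add: norm_exp_i_times)
  qed simp
  then have "has_bochner_integral lborel (\<lambda>x. std_normal_density x *\<^sub>R iexp (\<theta> * x))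
               (char std_normal_distribution \<theta>)"
    unfolding char_def by (subst integral_density) (auto simp: has_bochner_integral_iff)
  then show ?thesis
    by (simp add: char_std_normal_distribution)
qed

lemma has_bochner_integral_gaussian_echar:
  fixes \<delta> s :: real
  assumes "\<delta> > 0"
  shows "has_bochner_integral lborel
           (\<lambda>t. complex_of_real (exp (- pi * \<delta> * t\<^sup>2)) * echar (- (t * s)))
           (complex_of_real (exp (- pi * s\<^sup>2 / \<delta>) / sqrt \<delta>))"
proof -
  define c where "c = 1 / sqrt (2 * pi * \<delta>)"
  define \<theta> where "\<theta> = - 2 * pi * c * s"
  have c_pos: "c > 0" and c_sq: "c\<^sup>2 = 1 / (2 * pi * \<delta>)"
    using assms by (simp_all add: c_def power_divide)
  let ?f = "\<lambda>t. complex_of_real (exp (- pi * \<delta> * t\<^sup>2)) * echar (- (t * s))"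
  have f_scaled: "?f (0 + c * x) = sqrt (2 * pi) * (std_normal_density x *\<^sub>R iexp (\<theta> * x))" for x
  proof -
    have "- pi * \<delta> * (c * x)\<^sup>2 = - x\<^sup>2 / 2"
      using assms c_sq by (simp add: power_mult_distrib field_simps)
    moreover have "echar (- (c * x * s)) = iexp (\<theta> * x)"
      unfolding echar_def \<theta>_def by (simp add: algebra_simps)
    ultimately show ?thesis
      by (simp add: std_normal_density_def scaleR_conv_of_real)
  qed
  have "has_bochner_integral lborel (\<lambda>x. ?f (0 + c * x))
          (sqrt (2 * pi) * complex_of_real (exp (- \<theta>\<^sup>2 / 2)))"
    unfolding f_scaled by (intro has_bochner_integral_mult_right has_bochner_integral_std_normal_iexp)
  then have "has_bochner_integral lborel ?f
               (complex_of_real (c * sqrt (2 * pi) * exp (- \<theta>\<^sup>2 / 2)))"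
    using lborel_has_bochner_integral_real_affine_iff[of c ?f _ 0] c_pos
    by (simp add: scaleR_conv_of_real field_simps)
  moreover have "c * sqrt (2 * pi) = 1 / sqrt \<delta>"
    using assms by (simp add: c_def real_sqrt_mult)
  moreover have "- \<theta>\<^sup>2 / 2 = - pi * s\<^sup>2 / \<delta>"
  proof -
    have "\<theta>\<^sup>2 = 4 * pi\<^sup>2 * s\<^sup>2 * c\<^sup>2" by (simp add: \<theta>_def power2_eq_square)
    then show ?thesis using assms c_sq unfolding power2_eq_square by (simp add: field_simps)
  qed
  ultimately show ?thesis by simp
qed

lemma has_bochner_integral_lborel_prod:
  fixes f :: "'a::euclidean_space \<Rightarrow> real \<Rightarrow> 'b::{real_normed_field, banach, second_countable_topology}"
  assumes "\<And>b. b \<in> Basis \<Longrightarrow> has_bochner_integral lborel (f b) (I b)"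
  shows "has_bochner_integral lborel (\<lambda>x::'a. \<Prod>b\<in>Basis. f b (x \<bullet> b)) (\<Prod>b\<in>Basis. I b)"
proof -
  interpret product_sigma_finite "\<lambda>_::'a. lborel :: real measure"
    by (simp add: product_sigma_finite_def sigma_finite_lborel)
  let ?T = "\<lambda>g::'a \<Rightarrow> real. \<Sum>b\<in>Basis. g b *\<^sub>R b"
  have int: "\<And>b. b \<in> Basis \<Longrightarrow> integrable lborel (f b)"
    and val: "\<And>b. b \<in> Basis \<Longrightarrow> integral\<^sup>L lborel (f b) = I b"
    using assms by (auto simp: has_bochner_integral_iff)
  have T_meas: "?T \<in> measurable (\<Pi>\<^sub>M b\<in>Basis. lborel) borel" by measurable
  have meas: "(\<lambda>x::'a. \<Prod>b\<in>Basis. f b (x \<bullet> b)) \<in> borel_measurable borel"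
    using int by (intro borel_measurable_prod) (auto dest: borel_measurable_integrable)
  have comp: "(\<lambda>g. \<Prod>b\<in>Basis. f b (?T g \<bullet> b)) = (\<lambda>g. \<Prod>b\<in>Basis. f b (g b))"
    by (intro ext prod.cong) (simp_all add: inner_sum_left inner_Basis if_distrib cong: if_cong)
  have prod_int: "integrable (\<Pi>\<^sub>M b\<in>Basis. lborel) (\<lambda>g. \<Prod>b\<in>Basis. f b (g b))"
    using int by (intro product_integrable_prod) auto
  have "integrable lborel (\<lambda>x::'a. \<Prod>b\<in>Basis. f b (x \<bullet> b))"
    apply (subst lborel_eq)
    apply (subst integrable_distr_eq[OF T_meas])
    using meas apply simp
    using prod_int comp by simp
  moreover have "(LINT x|lborel. (\<Prod>b\<in>Basis. f b (x \<bullet> b))) = (\<Prod>b\<in>Basis. I b)"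
    apply (subst lborel_eq)
    apply (subst integral_distr[OF T_meas])
    using meas apply simp
    using comp product_integral_prod[of Basis f] int val by simp
  ultimately show ?thesis by (simp add: has_bochner_integral_iff)
qed

lemma norm_square_eq_sum_Basis: "(norm (x::'a::euclidean_space))\<^sup>2 = (\<Sum>b\<in>Basis. (x \<bullet> b)\<^sup>2)"
  by (subst power2_norm_eq_inner, subst euclidean_inner) (simp add: power2_eq_square)

lemma has_bochner_integral_gaussian_echar_euclidean:
  fixes \<eta> :: "'a::euclidean_space"
  assumes "\<delta> > 0"
  shows "has_bochner_integral lborel
           (\<lambda>x. complex_of_real (exp (- pi * \<delta> * (norm x)\<^sup>2)) * echar (- (x \<bullet> \<eta>)))
           (complex_of_real (exp (- pi * (norm \<eta>)\<^sup>2 / \<delta>) / sqrt \<delta> ^ DIM('a)))"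
proof -
  have split: "complex_of_real (exp (- pi * \<delta> * (norm x)\<^sup>2)) * echar (- (x \<bullet> \<eta>))
      = (\<Prod>b\<in>Basis. complex_of_real (exp (- pi * \<delta> * (x \<bullet> b)\<^sup>2)) * echar (- ((x \<bullet> b) * (\<eta> \<bullet> b))))"
    for x :: 'a
  proof -
    have "- (x \<bullet> \<eta>) = (\<Sum>b\<in>Basis. - ((x \<bullet> b) * (\<eta> \<bullet> b)))"
      by (simp add: euclidean_inner[of x \<eta>] sum_negf)
    moreover have "- pi * \<delta> * (norm x)\<^sup>2 = (\<Sum>b\<in>Basis. - pi * \<delta> * (x \<bullet> b)\<^sup>2)"
      by (simp add: norm_square_eq_sum_Basis sum_distrib_left)
    ultimately show ?thesis
      by (simp add: echar_sum exp_sum prod.distrib)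
  qed
  have prod_eq: "(\<Prod>b\<in>(Basis::'a set). complex_of_real (exp (- pi * (\<eta> \<bullet> b)\<^sup>2 / \<delta>) / sqrt \<delta>))
      = complex_of_real (exp (- pi * (norm \<eta>)\<^sup>2 / \<delta>) / sqrt \<delta> ^ DIM('a))"
  proof -
    have "- pi * (norm \<eta>)\<^sup>2 / \<delta> = (\<Sum>b\<in>Basis. - pi * (\<eta> \<bullet> b)\<^sup>2 / \<delta>)"
      by (simp add: norm_square_eq_sum_Basis sum_distrib_left sum_divide_distrib)
    then show ?thesis
      by (simp add: exp_sum prod_dividef)
  qed
  have "has_bochner_integral lborel
          (\<lambda>x::'a. \<Prod>b\<in>Basis. complex_of_real (exp (- pi * \<delta> * (x \<bullet> b)\<^sup>2)) * echar (- ((x \<bullet> b) * (\<eta> \<bullet> b))))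
          (\<Prod>b\<in>Basis. complex_of_real (exp (- pi * (\<eta> \<bullet> b)\<^sup>2 / \<delta>) / sqrt \<delta>))"
    by (intro has_bochner_integral_lborel_prod has_bochner_integral_gaussian_echar assms)
  then show ?thesis
    unfolding split prod_eq .
qed

definition gw_hat :: "real \<Rightarrow> real^2 \<Rightarrow> real" where
  "gw_hat \<delta> \<xi> = exp (- pi * (norm \<xi>)\<^sup>2 / \<delta>) / \<delta>"

lemma has_bochner_integral_gw_echar:
  assumes "\<delta> > 0"
  shows "has_bochner_integral lborel (\<lambda>x. gw \<delta> x * echar (- (x \<bullet> \<xi>))) (complex_of_real (gw_hat \<delta> \<xi>))"
  using has_bochner_integral_gaussian_echar_euclidean[OF assms, of \<xi>] assms
  unfolding gw_def gw_hat_def by (simp add: power2_eq_square)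

lemma gw_mult: "gw a x * gw b x = gw (a + b) x"
  unfolding gw_def of_real_mult[symmetric] exp_add[symmetric] by (simp add: algebra_simps)

lemma integrable_gw: "\<delta> > 0 \<Longrightarrow> integrable lborel (gw \<delta>)"
  using has_bochner_integral_gw_echar[of \<delta> 0] by (simp add: has_bochner_integral_iff)

lemma integral_gw_1: "(LINT x|lborel. gw 1 x) = 1"
  using has_bochner_integral_gw_echar[of 1 0] by (simp add: has_bochner_integral_iff gw_hat_def)

lemma gw_hat_nonneg: "\<delta> > 0 \<Longrightarrow> gw_hat \<delta> \<xi> \<ge> 0"
  by (simp add: gw_hat_def)

lemma gw_hat_le: "\<delta> > 0 \<Longrightarrow> gw_hat \<delta> \<xi> \<le> 1 / \<delta>"
  by (simp add: gw_hat_def divide_right_mono)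

lemma gw_hat_minus [simp]: "gw_hat \<delta> (- \<xi>) = gw_hat \<delta> \<xi>"
  by (simp add: gw_hat_def)

lemma gw_hat_scale:
  assumes "c \<noteq> 0"
  shows "gw_hat (\<delta> * c\<^sup>2) (c *\<^sub>R \<xi>) = gw_hat \<delta> \<xi> / c\<^sup>2"
  using assms by (simp add: gw_hat_def power_mult_distrib)

lemma continuous_on_gw_hat [continuous_intros]:
  assumes "continuous_on S f"
  shows "continuous_on S (\<lambda>x. gw_hat \<delta> (f x))"
proof -
  have eq: "(\<lambda>x. gw_hat \<delta> (f x)) = (\<lambda>x. exp (- pi * (norm (f x))\<^sup>2 * inverse \<delta>) * inverse \<delta>)"
    by (simp add: gw_hat_def divide_inverse fun_eq_iff)
  show ?thesis
    unfolding eq using assms by (intro continuous_intros)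
qed

lemma borel_measurable_gw_hat [measurable]: "gw_hat \<delta> \<in> borel_measurable borel"
  by (intro borel_measurable_continuous_onI continuous_on_gw_hat continuous_on_id)

lemma has_bochner_integral_gw_hat_echar:
  assumes "\<delta> > 0"
  shows "has_bochner_integral lborel (\<lambda>\<xi>. complex_of_real (gw_hat \<delta> \<xi>) * echar (\<xi> \<bullet> x)) (gw \<delta> x)"
proof -
  have "has_bochner_integral lborel (\<lambda>\<xi>. (1 / \<delta>) * (gw (1 / \<delta>) \<xi> * echar (- (\<xi> \<bullet> - x))))
          ((1 / \<delta>) * complex_of_real (gw_hat (1 / \<delta>) (- x)))"
    using assms by (intro has_bochner_integral_mult_right has_bochner_integral_gw_echar) simp
  then show ?thesis
    using assms by (simp add: gw_def gw_hat_def ac_simps)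
qed

lemma integrable_gw_hat: "\<delta> > 0 \<Longrightarrow> integrable lborel (gw_hat \<delta>)"
  using has_bochner_integral_gw_hat_echar[of \<delta> 0]
  by (simp add: has_bochner_integral_iff complex_of_real_integrable_eq)

lemma tendsto_gw_hat_at_infinity:
  assumes "\<delta> > 0" and "filterlim f at_infinity F"
  shows "((\<lambda>x. gw_hat \<delta> (f x)) \<longlongrightarrow> 0) F"
proof -
  have "filterlim (\<lambda>x. (pi / \<delta>) * (norm (f x))\<^sup>2) at_top F"
    using assms pi_gt_zero
    by (intro filterlim_tendsto_pos_mult_at_top[OF tendsto_const] filterlim_pow_at_top
        filterlim_at_infinity_imp_norm_at_top) auto
  then have "((\<lambda>x. exp (- ((pi / \<delta>) * (norm (f x))\<^sup>2)) / \<delta>) \<longlongrightarrow> 0 / \<delta>) F"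
    by (intro tendsto_divide tendsto_const filterlim_compose[OF exp_at_bot]
        filterlim_compose[OF filterlim_uminus_at_bot_at_top]) (use assms in auto)
  then show ?thesis by (simp add: gw_hat_def)
qed

lemma exp_norm_mult_gw_hat_le:
  assumes "\<delta> > 0"
  shows "exp (norm \<xi>) * gw_hat \<delta> (\<xi> - k) \<le> 2 * exp (norm k + \<delta> / (2 * pi)) * gw_hat (2 * \<delta>) (\<xi> - k)"
proof -
  define r where "r = norm (\<xi> - k)"
  have "norm \<xi> \<le> norm k + r"
    unfolding r_def using norm_triangle_ineq[of k "\<xi> - k"] by simp
  moreover have "r - (pi / (2 * \<delta>)) * r\<^sup>2 \<le> \<delta> / (2 * pi)"
  proof -
    \<comment> \<open>the quadratic \<open>r - a r\<^sup>2\<close> is at most \<open>1 / (4 a)\<close>\<close>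
    have "0 \<le> (pi / \<delta> * r - 1)\<^sup>2" by simp
    then show ?thesis using assms by (simp add: field_simps power2_eq_square)
  qed
  moreover have "pi * r\<^sup>2 / \<delta> = (pi / (2 * \<delta>)) * r\<^sup>2 + pi * r\<^sup>2 / (2 * \<delta>)"
    by (simp add: field_simps)
  ultimately have "norm \<xi> - pi * r\<^sup>2 / \<delta> \<le> norm k + \<delta> / (2 * pi) - pi * r\<^sup>2 / (2 * \<delta>)"
    by linarith
  then have "exp (norm \<xi>) * exp (- pi * r\<^sup>2 / \<delta>) \<le> exp (norm k + \<delta> / (2 * pi)) * exp (- pi * r\<^sup>2 / (2 * \<delta>))"
    by (simp add: exp_add[symmetric])
  then show ?thesis
    using assms unfolding gw_hat_def r_def[symmetric] by (simp add: field_simps)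
qed

lemma integrable_exp_norm_mult_gw_hat:
  assumes "\<delta> > 0"
  shows "integrable lborel (\<lambda>\<xi>. exp (norm \<xi>) * gw_hat \<delta> (\<xi> - k))"
proof (rule Bochner_Integration.integrable_bound)
  show "integrable lborel (\<lambda>\<xi>. 2 * exp (norm k + \<delta> / (2 * pi)) * gw_hat (2 * \<delta>) (\<xi> - k))"
    using lborel_integrable_affine[OF integrable_gw_hat[of "2 * \<delta>"], of 1 "- k"] assms by simp
  show "AE \<xi> in lborel. norm (exp (norm \<xi>) * gw_hat \<delta> (\<xi> - k))
          \<le> norm (2 * exp (norm k + \<delta> / (2 * pi)) * gw_hat (2 * \<delta>) (\<xi> - k))"
    using exp_norm_mult_gw_hat_le[OF assms] assms gw_hat_nonneg[of \<delta>] gw_hat_nonneg[of "2 * \<delta>"]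
    by (auto simp: abs_mult)
qed simp

section \<open>Fubini for the multiplier pairing\<close>

lemma integrable_lborel_pair_mult:
  fixes f :: "'a::euclidean_space \<Rightarrow> real" and g :: "'b::euclidean_space \<Rightarrow> real"
  assumes f: "integrable lborel f" and g: "integrable lborel g"
  shows "integrable lborel (\<lambda>p::'a \<times> 'b. f (fst p) * g (snd p))"
  unfolding lborel_prod[symmetric]
proof (rule lborel_pair.Fubini_integrable)
  have [measurable]: "f \<in> borel_measurable borel" "g \<in> borel_measurable borel"
    using f g by auto
  show "(\<lambda>p. f (fst p) * g (snd p)) \<in> borel_measurable (lborel \<Otimes>\<^sub>M lborel)"
    by measurable
  have "(\<lambda>x. LINT y|lborel. norm (f (fst (x, y)) * g (snd (x, y)))) = (\<lambda>x. \<bar>f x\<bar> * (LINT y|lborel. \<bar>g y\<bar>))"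
    by (simp add: abs_mult)
  then show "integrable lborel (\<lambda>x. LINT y|lborel. norm (f (fst (x, y)) * g (snd (x, y))))"
    using f by simp
  show "AE x in lborel. integrable lborel (\<lambda>y. f (fst (x, y)) * g (snd (x, y)))"
    using g by simp
qed

lemma integral_lborel_pair:
  fixes f :: "'a::euclidean_space \<times> 'b::euclidean_space \<Rightarrow> 'c::{banach, second_countable_topology}"
  assumes "integrable lborel f"
  shows "(LINT x|lborel. LINT y|lborel. f (x, y)) = (LINT p|lborel. f p)"
  using lborel_pair.integral_fst'[of f] assms by (simp add: lborel_prod)

lemma integrable_echar_pairing:
  fixes H :: "'a::euclidean_space \<times> 'a \<Rightarrow> complex" and h :: "'a \<Rightarrow> complex"
  assumes H: "integrable lborel H" and h: "integrable lborel h"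
  shows "integrable lborel (\<lambda>p::'a \<times> ('a \<times> 'a). H (snd p) * (echar ((fst (snd p) + snd (snd p)) \<bullet> fst p) * h (fst p)))"
proof (rule Bochner_Integration.integrable_bound)
  show "integrable lborel (\<lambda>p::'a \<times> ('a \<times> 'a). norm (h (fst p)) * norm (H (snd p)))"
    using H h by (intro integrable_lborel_pair_mult integrable_norm)
  have H_meas: "H \<in> borel_measurable borel" and h_meas: "h \<in> borel_measurable borel"
    using H h by auto
  have "(\<lambda>p::'a \<times> ('a \<times> 'a). H (snd p)) \<in> borel_measurable borel"
    by (rule measurable_compose[OF _ H_meas]) (intro borel_measurable_continuous_onI continuous_intros)
  moreover have "(\<lambda>p::'a \<times> ('a \<times> 'a). h (fst p)) \<in> borel_measurable borel"
    by (rule measurable_compose[OF _ h_meas]) (intro borel_measurable_continuous_onI continuous_intros)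
  moreover have "(\<lambda>p::'a \<times> ('a \<times> 'a). echar ((fst (snd p) + snd (snd p)) \<bullet> fst p)) \<in> borel_measurable borel"
    by (intro borel_measurable_continuous_onI continuous_intros)
  ultimately show "(\<lambda>p::'a \<times> ('a \<times> 'a). H (snd p) * (echar ((fst (snd p) + snd (snd p)) \<bullet> fst p) * h (fst p)))
      \<in> borel_measurable lborel"
    by (simp only: measurable_lborel2) (intro borel_measurable_times)
qed (simp add: norm_mult mult.commute)

lemma integral_pairing_iterated:
  fixes H :: "'a::euclidean_space \<times> 'a \<Rightarrow> complex" and h :: "'a \<Rightarrow> complex"
  assumes H: "integrable lborel H" and h: "integrable lborel h"
  shows "(LINT x|lborel. (LINT \<xi>1|lborel. LINT \<xi>2|lborel. H (\<xi>1, \<xi>2) * echar ((\<xi>1 + \<xi>2) \<bullet> x)) * h x)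
       = (LINT \<xi>|lborel. H \<xi> * (LINT x|lborel. echar ((fst \<xi> + snd \<xi>) \<bullet> x) * h x))"
proof -
  have iterated: "(LINT \<xi>1|lborel. LINT \<xi>2|lborel. H (\<xi>1, \<xi>2) * echar ((\<xi>1 + \<xi>2) \<bullet> x))
      = (LINT \<xi>|lborel. H \<xi> * echar ((fst \<xi> + snd \<xi>) \<bullet> x))" for x
  proof -
    have "(\<lambda>\<xi>::'a \<times> 'a. echar ((fst \<xi> + snd \<xi>) \<bullet> x)) \<in> borel_measurable borel"
      by (intro borel_measurable_continuous_onI continuous_intros)
    then have "integrable lborel (\<lambda>\<xi>. H \<xi> * echar ((fst \<xi> + snd \<xi>) \<bullet> x))"
      using H by (intro Bochner_Integration.integrable_bound[OF H]) (auto simp: norm_mult)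
    then show ?thesis using integral_lborel_pair by fastforce
  qed
  let ?\<Psi> = "\<lambda>x \<xi>. H \<xi> * (echar ((fst \<xi> + snd \<xi>) \<bullet> x) * h x)"
  have "(LINT \<xi>|lborel. LINT x|lborel. ?\<Psi> x \<xi>) = (LINT x|lborel. LINT \<xi>|lborel. ?\<Psi> x \<xi>)"
    using lborel_pair.Fubini_integral[of ?\<Psi>] integrable_echar_pairing[OF H h]
    by (simp add: lborel_prod case_prod_beta')
  moreover have "(LINT x|lborel. ?\<Psi> x \<xi>) = H \<xi> * (LINT x|lborel. echar ((fst \<xi> + snd \<xi>) \<bullet> x) * h x)" for \<xi>
    by (simp only: integral_mult_right_zero)
  moreover have "(LINT \<xi>|lborel. ?\<Psi> x \<xi>) = (LINT \<xi>|lborel. H \<xi> * echar ((fst \<xi> + snd \<xi>) \<bullet> x)) * h x" for x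
    by (simp only: mult.assoc[symmetric] integral_mult_left_zero)
  ultimately show ?thesis
    by (simp only: iterated)
qed

lemma integral_gw_hat_triple:
  assumes "\<alpha> > 0" and "\<beta> > 0" and "\<gamma> > 0" and "\<alpha> + \<beta> + \<gamma> = 1"
  shows "(LINT u|lborel. gw_hat \<alpha> (fst u) * gw_hat \<beta> (snd u) * gw_hat \<gamma> (fst u + snd u)) = 1"
proof -
  let ?H = "\<lambda>u::(real^2) \<times> (real^2). complex_of_real (gw_hat \<alpha> (fst u) * gw_hat \<beta> (snd u))"
  have "integrable lborel (\<lambda>u::(real^2) \<times> (real^2). gw_hat \<alpha> (fst u) * gw_hat \<beta> (snd u))"
    using assms by (intro integrable_lborel_pair_mult integrable_gw_hat)
  then have H: "integrable lborel ?H" by (simp only: complex_of_real_integrable_eq)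
  have inverse_ft: "(LINT u1|lborel. LINT u2|lborel. ?H (u1, u2) * echar ((u1 + u2) \<bullet> x)) = gw \<alpha> x * gw \<beta> x" for x
  proof -
    have split: "?H (u1, u2) * echar ((u1 + u2) \<bullet> x)
        = (complex_of_real (gw_hat \<alpha> u1) * echar (u1 \<bullet> x)) * (complex_of_real (gw_hat \<beta> u2) * echar (u2 \<bullet> x))" for u1 u2
      by (simp add: inner_add_left echar_add)
    show ?thesis
      using has_bochner_integral_gw_hat_echar[of \<alpha> x] has_bochner_integral_gw_hat_echar[of \<beta> x] assms
      unfolding split integral_mult_right_zero integral_mult_left_zero
      by (simp add: has_bochner_integral_iff)
  qed
  have forward_ft: "(LINT x|lborel. echar (v \<bullet> x) * gw \<gamma> x) = gw_hat \<gamma> v" for v :: "real^2"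
  proof -
    have eq: "gw \<gamma> x * echar (- (x \<bullet> - v)) = echar (v \<bullet> x) * gw \<gamma> x" for x
      by (simp only: inner_minus_right minus_minus inner_commute[of x v] mult.commute)
    show ?thesis
      using has_bochner_integral_gw_echar[OF assms(3), of "- v"]
      unfolding eq gw_hat_minus has_bochner_integral_iff by blast
  qed
  have "1 = (LINT x|lborel. gw \<alpha> x * gw \<beta> x * gw \<gamma> x)"
    using integral_gw_1 assms(4) by (simp add: gw_mult)
  also have "\<dots> = (LINT u|lborel. ?H u * complex_of_real (gw_hat \<gamma> (fst u + snd u)))"
    using integral_pairing_iterated[OF H integrable_gw[OF assms(3)]] unfolding inverse_ft forward_ft .
  also have "\<dots> = (LINT u|lborel. complex_of_real (gw_hat \<alpha> (fst u) * gw_hat \<beta> (snd u) * gw_hat \<gamma> (fst u + snd u)))"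
    by (simp only: of_real_mult)
  also have "\<dots> = complex_of_real (LINT u|lborel. gw_hat \<alpha> (fst u) * gw_hat \<beta> (snd u) * gw_hat \<gamma> (fst u + snd u))"
    by (rule integral_complex_of_real)
  finally show ?thesis
    using of_real_eq_1_iff by (metis (mono_tags))
qed

section \<open>Concentration of the Gaussian coefficients\<close>

lemma exp_growth_nonneg:
  assumes "\<And>p. norm (m p) \<le> C * exp (norm (p::'a::real_normed_vector))"
  shows "0 \<le> C"
  using order_trans[OF norm_ge_zero assms[of 0]] by simp

lemma exp_growth_Pair:
  fixes m :: "'a::real_normed_vector \<times> 'b::real_normed_vector \<Rightarrow> 'c::real_normed_vector"
  assumes "\<And>p. norm (m p) \<le> C * exp (norm p)"
  shows "norm (m (a, b)) \<le> C * (exp (norm a) * exp (norm b))"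
proof -
  have "exp (norm (a, b)) \<le> exp (norm a) * exp (norm b)"
    using norm_Pair_le[of a b] by (simp flip: exp_add)
  then show ?thesis
    using assms[of "(a, b)"] exp_growth_nonneg[OF assms] by (meson mult_left_mono order_trans)
qed

lemma exp_growth_shift_le:
  fixes m :: "'a::real_normed_vector \<times> 'b::real_normed_vector \<Rightarrow> 'c::real_normed_vector"
  assumes "\<And>p. norm (m p) \<le> C * exp (norm p)" and "\<bar>s\<bar> \<le> 1"
  shows "norm (m (t + s *\<^sub>R u))
    \<le> C * (exp (norm (fst t)) * exp (norm (snd t))) * (exp (norm (fst u)) * exp (norm (snd u)))"
proof -
  have shift: "exp (norm (x + s *\<^sub>R y)) \<le> exp (norm x) * exp (norm y)" for x y :: "'d::real_normed_vector"
  proof -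
    have "norm (x + s *\<^sub>R y) \<le> norm x + norm y"
      using norm_triangle_ineq[of x "s *\<^sub>R y"] assms(2) mult_left_le_one_le[of "norm y" "\<bar>s\<bar>"]
      by (simp add: mult.commute)
    then show ?thesis by (simp flip: exp_add)
  qed
  have "t + s *\<^sub>R u = (fst t + s *\<^sub>R fst u, snd t + s *\<^sub>R snd u)"
    by (simp add: prod_eq_iff)
  then have "norm (m (t + s *\<^sub>R u))
      \<le> C * (exp (norm (fst t + s *\<^sub>R fst u)) * exp (norm (snd t + s *\<^sub>R snd u)))"
    by (simp only: exp_growth_Pair[OF assms(1)])
  also have "\<dots> \<le> C * ((exp (norm (fst t)) * exp (norm (fst u))) * (exp (norm (snd t)) * exp (norm (snd u))))"
    by (intro mult_left_mono mult_mono shift exp_growth_nonneg[OF assms(1)]) simp_all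
  finally show ?thesis by (simp add: ac_simps)
qed

text \<open>The smoothed trilinear form evaluated on the characters with frequencies \<open>k1\<close>, \<open>k2\<close>, \<open>k3\<close>.\<close>

definition gauss_coeff ::
  "((real^2) \<times> (real^2) \<Rightarrow> complex) \<Rightarrow> real \<Rightarrow> real \<Rightarrow> real \<Rightarrow> real^2 \<Rightarrow> real^2 \<Rightarrow> real^2 \<Rightarrow> complex"
  where
  "gauss_coeff m \<delta>1 \<delta>2 \<delta>3 k1 k2 k3 =
     (LINT \<xi>|lborel. m \<xi> * complex_of_real
        (gw_hat \<delta>1 (fst \<xi> - k1) * gw_hat \<delta>2 (snd \<xi> - k2) * gw_hat \<delta>3 (fst \<xi> + snd \<xi> - k3)))"

lemma integrable_growth_mult_gw_hat:
  fixes m g :: "(real^2) \<times> (real^2) \<Rightarrow> complex"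
  assumes "m \<in> borel_measurable borel" and growth: "\<And>p. norm (m p) \<le> C * exp (norm p)"
    and "g \<in> borel_measurable borel" and g_bound: "\<And>p. norm (g p) \<le> B"
    and "\<delta>1 > 0" and "\<delta>2 > 0"
  shows "integrable lborel
           (\<lambda>\<xi>. m \<xi> * g \<xi> * complex_of_real (gw_hat \<delta>1 (fst \<xi> - k1) * gw_hat \<delta>2 (snd \<xi> - k2)))"
proof (rule Bochner_Integration.integrable_bound)
  let ?w = "\<lambda>\<xi>::(real^2) \<times> (real^2). C * B *
              ((exp (norm (fst \<xi>)) * gw_hat \<delta>1 (fst \<xi> - k1)) * (exp (norm (snd \<xi>)) * gw_hat \<delta>2 (snd \<xi> - k2)))"
  show "integrable lborel ?w"
    using assms by (intro integrable_mult_right integrable_lborel_pair_mult integrable_exp_norm_mult_gw_hat)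
  show "(\<lambda>\<xi>. m \<xi> * g \<xi> * complex_of_real (gw_hat \<delta>1 (fst \<xi> - k1) * gw_hat \<delta>2 (snd \<xi> - k2)))
          \<in> borel_measurable lborel"
  proof -
    have "(\<lambda>\<xi>::(real^2) \<times> (real^2). complex_of_real (gw_hat \<delta>1 (fst \<xi> - k1) * gw_hat \<delta>2 (snd \<xi> - k2)))
            \<in> borel_measurable borel"
      by (intro borel_measurable_continuous_onI continuous_intros)
    then show ?thesis
      using assms by (simp only: measurable_lborel2) (intro borel_measurable_times)
  qed
  show "AE \<xi> in lborel. norm (m \<xi> * g \<xi> * complex_of_real (gw_hat \<delta>1 (fst \<xi> - k1) * gw_hat \<delta>2 (snd \<xi> - k2)))
          \<le> norm (?w \<xi>)"
  proof (intro AE_I2)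
    fix \<xi> :: "(real^2) \<times> (real^2)"
    have "0 \<le> B" using g_bound[of 0] norm_ge_zero[of "g 0"] by linarith
    have "norm (m \<xi> * g \<xi> * complex_of_real (gw_hat \<delta>1 (fst \<xi> - k1) * gw_hat \<delta>2 (snd \<xi> - k2)))
        = norm (m \<xi>) * norm (g \<xi>) * (gw_hat \<delta>1 (fst \<xi> - k1) * gw_hat \<delta>2 (snd \<xi> - k2))"
      using assms by (simp add: norm_mult gw_hat_nonneg)
    also have "\<dots> \<le> (C * (exp (norm (fst \<xi>)) * exp (norm (snd \<xi>)))) * B * (gw_hat \<delta>1 (fst \<xi> - k1) * gw_hat \<delta>2 (snd \<xi> - k2))"
      using assms exp_growth_Pair[OF growth, of "fst \<xi>" "snd \<xi>"] exp_growth_nonneg[OF growth] \<open>0 \<le> B\<close>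
      by (intro mult_mono mult_nonneg_nonneg) (auto simp: gw_hat_nonneg)
    also have "\<dots> \<le> norm (?w \<xi>)"
      by (simp add: ac_simps)
    finally show "norm (m \<xi> * g \<xi> * complex_of_real (gw_hat \<delta>1 (fst \<xi> - k1) * gw_hat \<delta>2 (snd \<xi> - k2)))
          \<le> norm (?w \<xi>)" .
  qed
qed

lemma integrable_gauss_coeff:
  fixes m :: "(real^2) \<times> (real^2) \<Rightarrow> complex"
  assumes "m \<in> borel_measurable borel" and "\<And>p. norm (m p) \<le> C * exp (norm p)"
    and "\<delta>1 > 0" and "\<delta>2 > 0" and "\<delta>3 > 0"
  shows "integrable lborel (\<lambda>\<xi>. m \<xi> * complex_of_real
           (gw_hat \<delta>1 (fst \<xi> - k1) * gw_hat \<delta>2 (snd \<xi> - k2) * gw_hat \<delta>3 (fst \<xi> + snd \<xi> - k3)))"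
proof -
  have "(\<lambda>\<xi>::(real^2) \<times> (real^2). complex_of_real (gw_hat \<delta>3 (fst \<xi> + snd \<xi> - k3))) \<in> borel_measurable borel"
    by (intro borel_measurable_continuous_onI continuous_intros)
  then have "integrable lborel (\<lambda>\<xi>. m \<xi> * complex_of_real (gw_hat \<delta>3 (fst \<xi> + snd \<xi> - k3))
          * complex_of_real (gw_hat \<delta>1 (fst \<xi> - k1) * gw_hat \<delta>2 (snd \<xi> - k2)))"
    using assms gw_hat_le[OF assms(5)] gw_hat_nonneg[OF assms(5)]
    by (intro integrable_growth_mult_gw_hat[where B = "1 / \<delta>3"]) auto
  then show ?thesis
    by (simp add: ac_simps)
qed

lemma gauss_coeff_rescale:
  fixes m :: "(real^2) \<times> (real^2) \<Rightarrow> complex"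
  assumes "c \<noteq> 0"
  shows "complex_of_real (c\<^sup>2) * gauss_coeff m (\<alpha> * c\<^sup>2) (\<beta> * c\<^sup>2) (\<gamma> * c\<^sup>2) k1 k2 k3
    = (LINT u|lborel. m ((k1, k2) + c *\<^sub>R u) * complex_of_real
         (gw_hat \<alpha> (fst u) * gw_hat \<beta> (snd u) * gw_hat \<gamma> (fst u + snd u + (k1 + k2 - k3) /\<^sub>R c)))"
proof -
  let ?f = "\<lambda>\<xi>. m \<xi> * complex_of_real (gw_hat (\<alpha> * c\<^sup>2) (fst \<xi> - k1) * gw_hat (\<beta> * c\<^sup>2) (snd \<xi> - k2)
                  * gw_hat (\<gamma> * c\<^sup>2) (fst \<xi> + snd \<xi> - k3))"
  let ?F = "\<lambda>u. m ((k1, k2) + c *\<^sub>R u) * complex_of_real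
              (gw_hat \<alpha> (fst u) * gw_hat \<beta> (snd u) * gw_hat \<gamma> (fst u + snd u + (k1 + k2 - k3) /\<^sub>R c))"
  have substituted: "?f ((k1, k2) + c *\<^sub>R u) = complex_of_real (1 / c ^ 6) * ?F u" for u
  proof -
    have "fst ((k1, k2) + c *\<^sub>R u) + snd ((k1, k2) + c *\<^sub>R u) - k3
        = c *\<^sub>R (fst u + snd u + (k1 + k2 - k3) /\<^sub>R c)"
      using assms by (simp add: algebra_simps)
    then have "?f ((k1, k2) + c *\<^sub>R u) = m ((k1, k2) + c *\<^sub>R u) * complex_of_real
        (gw_hat \<alpha> (fst u) / c\<^sup>2 * (gw_hat \<beta> (snd u) / c\<^sup>2)
          * (gw_hat \<gamma> (fst u + snd u + (k1 + k2 - k3) /\<^sub>R c) / c\<^sup>2))"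
      by (simp add: gw_hat_scale[OF assms])
    moreover have "x / c\<^sup>2 * (y / c\<^sup>2) * (z / c\<^sup>2) = 1 / c ^ 6 * (x * y * z)" for x y z :: real
      using assms by (simp add: field_simps eval_nat_numeral)
    ultimately show ?thesis
      by simp
  qed
  have "gauss_coeff m (\<alpha> * c\<^sup>2) (\<beta> * c\<^sup>2) (\<gamma> * c\<^sup>2) k1 k2 k3
      = \<bar>c\<bar> ^ 4 *\<^sub>R (LINT u|lborel. ?f ((k1, k2) + c *\<^sub>R u))"
    unfolding gauss_coeff_def using lborel_integral_affine[OF assms, of ?f "(k1, k2)"] by simp
  also have "\<dots> = complex_of_real (c ^ 4 / c ^ 6) * (LINT u|lborel. ?F u)"
    unfolding substituted integral_mult_right_zero by (simp add: scaleR_conv_of_real)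
  finally have rescaled: "gauss_coeff m (\<alpha> * c\<^sup>2) (\<beta> * c\<^sup>2) (\<gamma> * c\<^sup>2) k1 k2 k3
      = complex_of_real (c ^ 4 / c ^ 6) * (LINT u|lborel. ?F u)" .
  have "c\<^sup>2 * (c ^ 4 / c ^ 6) = 1"
    using assms by (simp add: field_simps eval_nat_numeral)
  then show ?thesis
    unfolding rescaled by (simp only: mult.assoc[symmetric] of_real_mult[symmetric] of_real_1 mult_1_left)
qed

lemma filterlim_sqrt_at_right_0: "filterlim sqrt (at_right 0) (at_right (0::real))"
proof (rule tendsto_imp_filterlim_at_right)
  show "(sqrt \<longlongrightarrow> 0) (at_right (0::real))"
    using tendsto_real_sqrt[OF tendsto_ident_at, of 0 "{0<..}"] by simp
  show "\<forall>\<^sub>F x in at_right 0. 0 < sqrt x"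
    by (simp add: eventually_at_right_less)
qed

lemma filterlim_ray_at_infinity:
  fixes d :: "'a::real_normed_vector"
  assumes "d \<noteq> 0"
  shows "filterlim (\<lambda>T. s + T *\<^sub>R d) at_infinity at_top"
  unfolding filterlim_at_infinity_conv_norm_at_top
proof (rule filterlim_at_top_mono)
  have "filterlim (\<lambda>T. norm d * T) at_top at_top"
    using assms by (intro filterlim_tendsto_pos_mult_at_top[OF tendsto_const] filterlim_ident) auto
  then show "filterlim (\<lambda>T. - norm s + norm d * T) at_top at_top"
    by (rule filterlim_tendsto_add_at_top[OF tendsto_const])
  show "\<forall>\<^sub>F T in at_top. - norm s + norm d * T \<le> norm (s + T *\<^sub>R d)"
    using eventually_ge_at_top[of 0]
  proof eventually_elim
    case (elim T)
    then show ?case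
      using norm_triangle_ineq2[of "T *\<^sub>R d" "- s"] by (simp add: mult.commute add.commute)
  qed
qed

lemma tendsto_rescaled_gauss_integrand:
  fixes m :: "(real^2) \<times> (real^2) \<Rightarrow> complex"
  assumes cont: "isCont m t" and "\<gamma> > 0"
  shows "((\<lambda>T. m (t + inverse T *\<^sub>R u) * complex_of_real
             (gw_hat \<alpha> (fst u) * gw_hat \<beta> (snd u) * gw_hat \<gamma> (fst u + snd u + T *\<^sub>R d)))
          \<longlongrightarrow> (if d = 0 then m t else 0) * complex_of_real
             (gw_hat \<alpha> (fst u) * gw_hat \<beta> (snd u) * gw_hat \<gamma> (fst u + snd u))) at_top"
proof -
  have "((\<lambda>T. t + inverse T *\<^sub>R u) \<longlongrightarrow> t + 0 *\<^sub>R u) at_top"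
    by (intro tendsto_intros tendsto_inverse_0_at_top filterlim_ident)
  then have m_lim: "((\<lambda>T. m (t + inverse T *\<^sub>R u)) \<longlongrightarrow> m t) at_top"
    using isCont_tendsto_compose[OF cont] by simp
  show ?thesis
  proof (cases "d = 0")
    case True
    then show ?thesis
      by (simp add: tendsto_mult_right[OF m_lim])
  next
    case False
    have "((\<lambda>T. gw_hat \<gamma> (fst u + snd u + T *\<^sub>R d)) \<longlongrightarrow> 0) at_top"
      by (intro tendsto_gw_hat_at_infinity[OF \<open>\<gamma> > 0\<close>] filterlim_ray_at_infinity False)
    then have "((\<lambda>T. m (t + inverse T *\<^sub>R u) * complex_of_real
        (gw_hat \<alpha> (fst u) * gw_hat \<beta> (snd u) * gw_hat \<gamma> (fst u + snd u + T *\<^sub>R d)))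
        \<longlongrightarrow> m t * complex_of_real (gw_hat \<alpha> (fst u) * gw_hat \<beta> (snd u) * 0)) at_top"
      by (intro tendsto_intros m_lim)
    then show ?thesis using False by simp
  qed
qed

lemma norm_rescaled_gauss_integrand_le:
  fixes m :: "(real^2) \<times> (real^2) \<Rightarrow> complex"
  assumes growth: "\<And>p. norm (m p) \<le> C * exp (norm p)"
    and "1 \<le> T" and \<alpha>: "\<alpha> > 0" and \<beta>: "\<beta> > 0" and \<gamma>: "\<gamma> > 0"
  shows "norm (m (t + inverse T *\<^sub>R u) * complex_of_real
             (gw_hat \<alpha> (fst u) * gw_hat \<beta> (snd u) * gw_hat \<gamma> (fst u + snd u + T *\<^sub>R d)))
    \<le> C * (exp (norm (fst t)) * exp (norm (snd t))) / \<gamma>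
        * ((exp (norm (fst u)) * gw_hat \<alpha> (fst u)) * (exp (norm (snd u)) * gw_hat \<beta> (snd u)))"
proof -
  let ?K = "gw_hat \<alpha> (fst u) * gw_hat \<beta> (snd u) * gw_hat \<gamma> (fst u + snd u + T *\<^sub>R d)"
  have m_le: "norm (m (t + inverse T *\<^sub>R u))
      \<le> C * (exp (norm (fst t)) * exp (norm (snd t))) * (exp (norm (fst u)) * exp (norm (snd u)))"
    using \<open>1 \<le> T\<close> by (intro exp_growth_shift_le[OF growth]) (simp add: inverse_le_1_iff)
  have K_le: "?K \<le> gw_hat \<alpha> (fst u) * gw_hat \<beta> (snd u) * (1 / \<gamma>)"
    using \<alpha> \<beta> \<gamma> by (intro mult_left_mono gw_hat_le mult_nonneg_nonneg gw_hat_nonneg)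
  have K_nonneg: "0 \<le> ?K"
    using \<alpha> \<beta> \<gamma> by (intro mult_nonneg_nonneg gw_hat_nonneg)
  have "norm (m (t + inverse T *\<^sub>R u) * complex_of_real ?K) = norm (m (t + inverse T *\<^sub>R u)) * ?K"
    using K_nonneg by (simp only: norm_mult norm_of_real abs_of_nonneg)
  also have "\<dots> \<le> (C * (exp (norm (fst t)) * exp (norm (snd t))) * (exp (norm (fst u)) * exp (norm (snd u))))
        * (gw_hat \<alpha> (fst u) * gw_hat \<beta> (snd u) * (1 / \<gamma>))"
    by (rule mult_mono[OF m_le K_le order_trans[OF norm_ge_zero m_le] K_nonneg])
  also have "\<dots> = C * (exp (norm (fst t)) * exp (norm (snd t))) / \<gamma>
        * ((exp (norm (fst u)) * gw_hat \<alpha> (fst u)) * (exp (norm (snd u)) * gw_hat \<beta> (snd u)))"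
    by (simp add: ac_simps)
  finally show ?thesis .
qed

lemma tendsto_rescaled_gauss_integral:
  fixes m :: "(real^2) \<times> (real^2) \<Rightarrow> complex"
  assumes m_meas: "m \<in> borel_measurable borel" and cont: "isCont m t"
    and growth: "\<And>p. norm (m p) \<le> C * exp (norm p)"
    and \<alpha>: "\<alpha> > 0" and \<beta>: "\<beta> > 0" and \<gamma>: "\<gamma> > 0"
  shows "((\<lambda>c. LINT u|lborel. m (t + c *\<^sub>R u) * complex_of_real
             (gw_hat \<alpha> (fst u) * gw_hat \<beta> (snd u) * gw_hat \<gamma> (fst u + snd u + d /\<^sub>R c)))
          \<longlongrightarrow> (if d = 0 then m t else 0) * complex_of_real
             (LINT u|lborel. gw_hat \<alpha> (fst u) * gw_hat \<beta> (snd u) * gw_hat \<gamma> (fst u + snd u)))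
         (at_right 0)"
proof -
  let ?s = "\<lambda>T u. m (t + inverse T *\<^sub>R u) * complex_of_real
              (gw_hat \<alpha> (fst u) * gw_hat \<beta> (snd u) * gw_hat \<gamma> (fst u + snd u + T *\<^sub>R d))"
  let ?f = "\<lambda>u. (if d = 0 then m t else 0) * complex_of_real
              (gw_hat \<alpha> (fst u) * gw_hat \<beta> (snd u) * gw_hat \<gamma> (fst u + snd u))"
  let ?w = "\<lambda>u. C * (exp (norm (fst t)) * exp (norm (snd t))) / \<gamma>
              * ((exp (norm (fst u)) * gw_hat \<alpha> (fst u)) * (exp (norm (snd u)) * gw_hat \<beta> (snd u)))"
  have "((\<lambda>T. LINT u|lborel. ?s T u) \<longlongrightarrow> (LINT u|lborel. ?f u)) at_top"
  proof (rule integral_dominated_convergence_at_top)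
    have "?f \<in> borel_measurable borel"
      by (rule borel_measurable_continuous_onI) (intro continuous_intros)
    then show "?f \<in> borel_measurable lborel" by (simp only: measurable_lborel2)
    have "(\<lambda>u. t + inverse T *\<^sub>R u) \<in> borel_measurable borel" for T
      by (intro borel_measurable_continuous_onI continuous_intros)
    moreover have "(\<lambda>u. complex_of_real (gw_hat \<alpha> (fst u) * gw_hat \<beta> (snd u) * gw_hat \<gamma> (fst u + snd u + T *\<^sub>R d)))
        \<in> borel_measurable borel" for T
      by (intro borel_measurable_continuous_onI continuous_intros)
    ultimately have "?s T \<in> borel_measurable borel" for T
      by (rule borel_measurable_times[OF measurable_compose[OF _ m_meas]])
    then show "?s T \<in> borel_measurable lborel" for T by (simp only: measurable_lborel2)
    show "integrable lborel ?w"
      using integrable_exp_norm_mult_gw_hat[OF \<alpha>, of 0] integrable_exp_norm_mult_gw_hat[OF \<beta>, of 0]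
      by (intro integrable_mult_right integrable_lborel_pair_mult) simp_all
    show "AE u in lborel. ((\<lambda>T. ?s T u) \<longlongrightarrow> ?f u) at_top"
      using \<gamma> by (intro AE_I2 tendsto_rescaled_gauss_integrand[OF cont])
    show "\<forall>\<^sub>F T in at_top. AE u in lborel. norm (?s T u) \<le> ?w u"
      using eventually_ge_at_top[of 1]
      by eventually_elim (intro AE_I2 norm_rescaled_gauss_integrand_le[OF growth _ \<alpha> \<beta> \<gamma>])
  qed
  moreover have "(LINT u|lborel. ?s T u)
      = (LINT u|lborel. m (t + inverse T *\<^sub>R u) * complex_of_real
          (gw_hat \<alpha> (fst u) * gw_hat \<beta> (snd u) * gw_hat \<gamma> (fst u + snd u + d /\<^sub>R inverse T)))" for T
    by simp
  moreover have "(LINT u|lborel. ?f u) = (if d = 0 then m t else 0) * complex_of_real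
      (LINT u|lborel. gw_hat \<alpha> (fst u) * gw_hat \<beta> (snd u) * gw_hat \<gamma> (fst u + snd u))"
    by (simp only: integral_mult_right_zero integral_complex_of_real)
  ultimately show ?thesis
    by (simp only: filterlim_at_right_to_top)
qed

lemma tendsto_gauss_coeff:
  fixes m :: "(real^2) \<times> (real^2) \<Rightarrow> complex"
  assumes "m \<in> borel_measurable borel" and "isCont m (k1, k2)"
    and "\<And>p. norm (m p) \<le> C * exp (norm p)"
    and "\<alpha> > 0" and "\<beta> > 0" and "\<gamma> > 0" and "\<alpha> + \<beta> + \<gamma> = 1"
  shows "((\<lambda>\<epsilon>. complex_of_real \<epsilon> * gauss_coeff m (\<alpha> * \<epsilon>) (\<beta> * \<epsilon>) (\<gamma> * \<epsilon>) k1 k2 k3)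
          \<longlongrightarrow> (if k3 = k1 + k2 then m (k1, k2) else 0)) (at_right 0)"
proof -
  let ?G = "\<lambda>c. LINT u|lborel. m ((k1, k2) + c *\<^sub>R u) * complex_of_real
              (gw_hat \<alpha> (fst u) * gw_hat \<beta> (snd u) * gw_hat \<gamma> (fst u + snd u + (k1 + k2 - k3) /\<^sub>R c))"
  have limit_eq: "(if k1 + k2 - k3 = 0 then m (k1, k2) else 0) * complex_of_real
      (LINT u|lborel. gw_hat \<alpha> (fst u) * gw_hat \<beta> (snd u) * gw_hat \<gamma> (fst u + snd u))
      = (if k3 = k1 + k2 then m (k1, k2) else 0)"
    using integral_gw_hat_triple[OF assms(4-7)] by auto
  have "(?G \<longlongrightarrow> (if k1 + k2 - k3 = 0 then m (k1, k2) else 0) * complex_of_real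
          (LINT u|lborel. gw_hat \<alpha> (fst u) * gw_hat \<beta> (snd u) * gw_hat \<gamma> (fst u + snd u))) (at_right 0)"
    using assms by (intro tendsto_rescaled_gauss_integral)
  then have "((\<lambda>\<epsilon>. ?G (sqrt \<epsilon>)) \<longlongrightarrow> (if k3 = k1 + k2 then m (k1, k2) else 0)) (at_right 0)"
    unfolding limit_eq by (rule filterlim_compose[OF _ filterlim_sqrt_at_right_0])
  moreover have "\<forall>\<^sub>F \<epsilon> in at_right 0.
      ?G (sqrt \<epsilon>) = complex_of_real \<epsilon> * gauss_coeff m (\<alpha> * \<epsilon>) (\<beta> * \<epsilon>) (\<gamma> * \<epsilon>) k1 k2 k3"
    using eventually_at_right_less[of "0::real"]
  proof eventually_elim
    case (elim \<epsilon>)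
    then show ?case
      using gauss_coeff_rescale[of "sqrt \<epsilon>" m \<alpha> \<beta> \<gamma> k1 k2 k3] by simp
  qed
  ultimately show ?thesis
    using tendsto_cong by fastforce
qed

section \<open>Orthogonality on the torus\<close>

lemma Zsq_add: "j \<in> Zsq \<Longrightarrow> k \<in> Zsq \<Longrightarrow> j + k \<in> Zsq"
  by (auto simp: Zsq_def)

lemma Zsq_diff: "j \<in> Zsq \<Longrightarrow> k \<in> Zsq \<Longrightarrow> j - k \<in> Zsq"
  by (auto simp: Zsq_def)

lemma inner_Basis_Zsq: "j \<in> Zsq \<Longrightarrow> b \<in> Basis \<Longrightarrow> j \<bullet> b \<in> \<int>"
  by (auto simp: Zsq_def Basis_vec_def inner_axis)

lemma has_bochner_integral_interval_echar:
  fixes n :: real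
  assumes "n \<in> \<int>"
  shows "has_bochner_integral lborel (\<lambda>t. indicator {a..a + 1} t *\<^sub>R echar (t * n)) (if n = 0 then 1 else 0)"
proof -
  have cont: "continuous_on {a..a + 1} (\<lambda>t. echar (t * n))"
    by (intro continuous_intros)
  have "integrable lborel (\<lambda>t. indicator {a..a + 1} t *\<^sub>R echar (t * n))"
    using borel_integrable_atLeastAtMost'[OF cont] by (simp add: set_integrable_def)
  moreover have "(LINT t|lborel. indicator {a..a + 1} t *\<^sub>R echar (t * n)) = (if n = 0 then 1 else 0)"
  proof (cases "n = 0")
    case True
    have "(LINT t|lborel. indicator {a..a + 1} t *\<^sub>R echar (t * n)) = complex_of_real (a + 1) - complex_of_real a"
      by (rule integral_FTC_atLeastAtMost[OF _ _ cont])
        (use True in \<open>auto intro!: derivative_eq_intros\<close>)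
    then show ?thesis using True by simp
  next
    case False
    define c where "c = complex_of_real (2 * pi * n) * \<i>"
    have "c \<noteq> 0" using False by (simp add: c_def)
    have echar_exp: "echar (t * n) = exp (complex_of_real t * c)" for t
      unfolding echar_def c_def by (simp add: algebra_simps)
    have "(LINT t|lborel. indicator {a..a + 1} t *\<^sub>R echar (t * n))
        = exp (complex_of_real (a + 1) * c) / c - exp (complex_of_real a * c) / c"
    proof (rule integral_FTC_atLeastAtMost[OF _ _ cont])
      fix x
      have "((\<lambda>z. exp (z * c) / c) has_field_derivative exp (complex_of_real x * c)) (at (complex_of_real x))"
        using \<open>c \<noteq> 0\<close> by (auto intro!: derivative_eq_intros)
      from has_vector_derivative_real_field[OF this]
      show "((\<lambda>t. exp (complex_of_real t * c) / c) has_vector_derivative echar (x * n)) (at x within {a..a + 1})"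
        unfolding echar_exp by (rule has_vector_derivative_at_within)
    qed simp
    also have "exp (complex_of_real (a + 1) * c) = exp (complex_of_real a * c)"
      using echar_Ints[OF assms] unfolding echar_def c_def by (simp add: exp_add algebra_simps)
    finally show ?thesis using False by simp
  qed
  ultimately show ?thesis by (simp add: has_bochner_integral_iff)
qed

lemma has_bochner_integral_cube_echar:
  assumes "j \<in> Zsq"
  shows "has_bochner_integral lborel (\<lambda>x. indicator (cbox (vec a) (vec (a + 1))) x *\<^sub>R echar (j \<bullet> x))
           (if j = 0 then 1 else 0)"
proof -
  have vec_Basis: "vec c \<bullet> b = c" if "b \<in> Basis" for c :: real and b :: "real^2"
    using that by (auto simp: Basis_vec_def inner_axis)
  have split: "indicator (cbox (vec a) (vec (a + 1))) x *\<^sub>R echar (j \<bullet> x)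
      = (\<Prod>b\<in>Basis. indicator {a..a + 1} (x \<bullet> b) *\<^sub>R echar ((x \<bullet> b) * (j \<bullet> b)))" for x :: "real^2"
  proof -
    have "indicator (cbox (vec a) (vec (a + 1))) x = (\<Prod>b\<in>Basis. indicator {a..a + 1} (x \<bullet> b) :: real)"
      by (auto simp: cbox_def vec_Basis split: split_indicator)
    moreover have "echar (j \<bullet> x) = (\<Prod>b\<in>Basis. echar ((x \<bullet> b) * (j \<bullet> b)))"
      by (simp add: euclidean_inner[of j x] echar_sum mult.commute)
    ultimately show ?thesis
      by (simp add: scaleR_conv_of_real prod.distrib)
  qed
  have "(\<Prod>b\<in>(Basis :: (real^2) set). if j \<bullet> b = 0 then 1 else 0) = (if j = 0 then 1 else (0::complex))"
  proof (cases "j = 0")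
    case False
    then obtain b where "b \<in> Basis" "j \<bullet> b \<noteq> 0"
      using euclidean_all_zero_iff[of j] by blast
    then show ?thesis by (auto intro: prod_zero)
  qed simp
  moreover have "has_bochner_integral lborel
      (\<lambda>x::real^2. \<Prod>b\<in>Basis. indicator {a..a + 1} (x \<bullet> b) *\<^sub>R echar ((x \<bullet> b) * (j \<bullet> b)))
      (\<Prod>b\<in>Basis. if j \<bullet> b = 0 then 1 else 0)"
    using assms by (intro has_bochner_integral_lborel_prod has_bochner_integral_interval_echar inner_Basis_Zsq)
  ultimately show ?thesis
    unfolding split by simp
qed

lemma set_integral_cube_echar_sum:
  fixes w :: "'i \<Rightarrow> complex" and j :: "'i \<Rightarrow> real^2"
  assumes "finite I" and "\<And>i. i \<in> I \<Longrightarrow> j i \<in> Zsq"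
  shows "(LINT x:cbox (vec a) (vec (a + 1))|lborel. (\<Sum>i\<in>I. w i * echar (j i \<bullet> x)))
       = (\<Sum>i\<in>I. if j i = 0 then w i else 0)"
proof -
  have "has_bochner_integral lborel
      (\<lambda>x. \<Sum>i\<in>I. w i * (indicator (cbox (vec a) (vec (a + 1))) x *\<^sub>R echar (j i \<bullet> x)))
      (\<Sum>i\<in>I. w i * (if j i = 0 then 1 else 0))"
    using assms by (intro has_bochner_integral_sum has_bochner_integral_mult_right has_bochner_integral_cube_echar)
  then show ?thesis
    unfolding set_lebesgue_integral_def has_bochner_integral_iff
    by (simp add: scaleR_sum_right if_distrib cong: if_cong)
qed

lemma fourierT_trig_sum:
  fixes a :: "real^2 \<Rightarrow> complex"
  assumes "finite K" and "K \<subseteq> Zsq" and "n \<in> Zsq"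
  shows "fourierT (\<lambda>x. \<Sum>k\<in>K. a k * echar (k \<bullet> x)) n = (if n \<in> K then a n else 0)"
proof -
  have "(\<Sum>k\<in>K. a k * echar (k \<bullet> x)) * echar (- (n \<bullet> x)) = (\<Sum>k\<in>K. a k * echar ((k - n) \<bullet> x))" for x
    by (simp add: sum_distrib_right mult.assoc inner_diff_left flip: echar_add)
  then have "fourierT (\<lambda>x. \<Sum>k\<in>K. a k * echar (k \<bullet> x)) n
      = (LINT x:cbox (vec 0) (vec (0 + 1))|lborel. \<Sum>k\<in>K. a k * echar ((k - n) \<bullet> x))"
    by (simp add: fourierT_def vec_0)
  also have "\<dots> = (\<Sum>k\<in>K. if k - n = 0 then a k else 0)"
    using assms by (intro set_integral_cube_echar_sum) (auto intro: Zsq_diff)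
  also have "\<dots> = (if n \<in> K then a n else 0)"
    using assms(1) by (simp add: sum.delta')
  finally show ?thesis .
qed

lemma periodization_trig_sum:
  fixes a b :: "real^2 \<Rightarrow> complex"
  assumes "finite K1" "K1 \<subseteq> Zsq" and "finite K2" "K2 \<subseteq> Zsq"
  shows "periodization m (\<lambda>x. \<Sum>k\<in>K1. a k * echar (k \<bullet> x)) (\<lambda>x. \<Sum>k\<in>K2. b k * echar (k \<bullet> x)) x
       = (\<Sum>n1\<in>K1. \<Sum>n2\<in>K2. m (n1, n2) * a n1 * b n2 * echar ((n1 + n2) \<bullet> x))"
proof -
  have "periodization m (\<lambda>x. \<Sum>k\<in>K1. a k * echar (k \<bullet> x)) (\<lambda>x. \<Sum>k\<in>K2. b k * echar (k \<bullet> x)) x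
      = (\<Sum>\<^sub>\<infinity>(n1, n2)\<in>K1 \<times> K2. m (n1, n2) * a n1 * b n2 * echar ((n1 + n2) \<bullet> x))"
    unfolding periodization_def
    by (rule infsum_cong_neutral) (use assms in \<open>auto simp: fourierT_trig_sum split: if_splits\<close>)
  also have "\<dots> = (\<Sum>n1\<in>K1. \<Sum>n2\<in>K2. m (n1, n2) * a n1 * b n2 * echar ((n1 + n2) \<bullet> x))"
    using assms by (simp add: sum.cartesian_product)
  finally show ?thesis .
qed

lemma integral_periodization_trig_sum:
  fixes a b c :: "real^2 \<Rightarrow> complex"
  assumes "finite K1" "K1 \<subseteq> Zsq" and "finite K2" "K2 \<subseteq> Zsq" and "finite K3" "K3 \<subseteq> Zsq"
  shows "(LINT x:cbox (vec (-1/2)) (vec (1/2))|lborel.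
            periodization m (\<lambda>x. \<Sum>k\<in>K1. a k * echar (k \<bullet> x)) (\<lambda>x. \<Sum>k\<in>K2. b k * echar (k \<bullet> x)) x
            * cnj (\<Sum>k\<in>K3. c k * echar (k \<bullet> x)))
       = (\<Sum>n1\<in>K1. \<Sum>n2\<in>K2. \<Sum>k3\<in>K3. a n1 * b n2 * cnj (c k3) * (if k3 = n1 + n2 then m (n1, n2) else 0))"
proof -
  let ?I = "K1 \<times> K2 \<times> K3"
  let ?w = "\<lambda>(n1, n2, k3). m (n1, n2) * a n1 * b n2 * cnj (c k3)"
  let ?j = "\<lambda>(n1, n2, k3). n1 + n2 - k3"
  have integrand: "periodization m (\<lambda>x. \<Sum>k\<in>K1. a k * echar (k \<bullet> x)) (\<lambda>x. \<Sum>k\<in>K2. b k * echar (k \<bullet> x)) x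
      * cnj (\<Sum>k\<in>K3. c k * echar (k \<bullet> x)) = (\<Sum>i\<in>?I. ?w i * echar (?j i \<bullet> x))" for x
  proof -
    have wave: "echar ((n1 + n2) \<bullet> x) * echar (- (k3 \<bullet> x)) = echar ((n1 + n2 - k3) \<bullet> x)" for n1 n2 k3
      by (simp add: inner_diff_left flip: echar_add)
    have "(m (n1, n2) * a n1 * b n2 * echar ((n1 + n2) \<bullet> x)) * (cnj (c k3) * echar (- (k3 \<bullet> x)))
        = ?w (n1, n2, k3) * echar (?j (n1, n2, k3) \<bullet> x)" for n1 n2 k3
      by (simp add: mult_ac flip: wave)
    then have "(\<Sum>n1\<in>K1. \<Sum>n2\<in>K2. m (n1, n2) * a n1 * b n2 * echar ((n1 + n2) \<bullet> x))
          * (\<Sum>k3\<in>K3. cnj (c k3) * echar (- (k3 \<bullet> x)))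
        = (\<Sum>n1\<in>K1. \<Sum>n2\<in>K2. \<Sum>k3\<in>K3. ?w (n1, n2, k3) * echar (?j (n1, n2, k3) \<bullet> x))"
      unfolding sum_distrib_right by (simp only: sum_distrib_left)
    then show ?thesis
      by (simp add: periodization_trig_sum[OF assms(1-4)] echar_minus sum.cartesian_product case_prod_unfold)
  qed
  have "(-1/2 + 1 :: real) = 1/2" by simp
  then have "(LINT x:cbox (vec (-1/2)) (vec (1/2))|lborel.
        periodization m (\<lambda>x. \<Sum>k\<in>K1. a k * echar (k \<bullet> x)) (\<lambda>x. \<Sum>k\<in>K2. b k * echar (k \<bullet> x)) x
        * cnj (\<Sum>k\<in>K3. c k * echar (k \<bullet> x)))
      = (LINT x:cbox (vec (-1/2)) (vec (-1/2 + 1))|lborel. (\<Sum>i\<in>?I. ?w i * echar (?j i \<bullet> x)))"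
    unfolding integrand by (simp only:)
  also have "\<dots> = (\<Sum>i\<in>?I. if ?j i = 0 then ?w i else 0)"
    using assms by (intro set_integral_cube_echar_sum) (auto intro!: Zsq_add Zsq_diff)
  also have "\<dots> = (\<Sum>n1\<in>K1. \<Sum>n2\<in>K2. \<Sum>k3\<in>K3. a n1 * b n2 * cnj (c k3) * (if k3 = n1 + n2 then m (n1, n2) else 0))"
    by (auto simp: sum.cartesian_product intro!: sum.cong)
  finally show ?thesis .
qed

section \<open>The smoothed form on trigonometric polynomials\<close>

lemma has_bochner_integral_trig_sum_gw_echar:
  fixes a :: "real^2 \<Rightarrow> complex"
  assumes "finite K" and "\<delta> > 0"
  shows "has_bochner_integral lborel (\<lambda>x. (\<Sum>k\<in>K. a k * echar (k \<bullet> x)) * gw \<delta> x * echar (- (x \<bullet> \<xi>)))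
           (\<Sum>k\<in>K. a k * complex_of_real (gw_hat \<delta> (\<xi> - k)))"
proof -
  have "(\<Sum>k\<in>K. a k * echar (k \<bullet> x)) * gw \<delta> x * echar (- (x \<bullet> \<xi>))
      = (\<Sum>k\<in>K. a k * (gw \<delta> x * echar (- (x \<bullet> (\<xi> - k)))))" for x
  proof -
    have wave: "echar (k \<bullet> x) * echar (- (x \<bullet> \<xi>)) = echar (- (x \<bullet> (\<xi> - k)))" for k
      by (simp add: inner_diff_right inner_commute flip: echar_add)
    have "(\<Sum>k\<in>K. a k * echar (k \<bullet> x)) * gw \<delta> x * echar (- (x \<bullet> \<xi>))
        = (\<Sum>k\<in>K. a k * (gw \<delta> x * (echar (k \<bullet> x) * echar (- (x \<bullet> \<xi>)))))"
      unfolding sum_distrib_right by (simp add: mult_ac)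
    then show ?thesis
      by (simp only: wave)
  qed
  then show ?thesis
    using assms by (simp only:) (intro has_bochner_integral_sum has_bochner_integral_mult_right has_bochner_integral_gw_echar)
qed

lemma fourierR_trig_sum_gw:
  fixes a :: "real^2 \<Rightarrow> complex"
  assumes "finite K" and "\<delta> > 0"
  shows "fourierR (\<lambda>y. (\<Sum>k\<in>K. a k * echar (k \<bullet> y)) * gw \<delta> y) \<xi> = (\<Sum>k\<in>K. a k * complex_of_real (gw_hat \<delta> (\<xi> - k)))"
  using has_bochner_integral_trig_sum_gw_echar[OF assms] unfolding fourierR_def has_bochner_integral_iff by blast

lemma has_bochner_integral_echar_cnj_trig_sum_gw:
  fixes c :: "real^2 \<Rightarrow> complex"
  assumes "finite K" and "\<delta> > 0"
  shows "has_bochner_integral lborel (\<lambda>x. echar (s \<bullet> x) * (cnj (\<Sum>k\<in>K. c k * echar (k \<bullet> x)) * gw \<delta> x))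
           (\<Sum>k\<in>K. cnj (c k) * complex_of_real (gw_hat \<delta> (s - k)))"
proof -
  \<comment> \<open>the integrand is the complex conjugate of the one for \<open>\<xi> = s\<close>, as \<open>gw\<close> is real\<close>
  have eq: "(\<lambda>x. echar (s \<bullet> x) * (cnj (\<Sum>k\<in>K. c k * echar (k \<bullet> x)) * gw \<delta> x))
      = (\<lambda>x. cnj ((\<Sum>k\<in>K. c k * echar (k \<bullet> x)) * gw \<delta> x * echar (- (x \<bullet> s))))"
    by (simp add: fun_eq_iff gw_def echar_minus inner_commute)
  have "cnj (\<Sum>k\<in>K. c k * complex_of_real (gw_hat \<delta> (s - k)))
      = (\<Sum>k\<in>K. cnj (c k) * complex_of_real (gw_hat \<delta> (s - k)))"
    by simp
  with has_bochner_integral_cnj[OF has_bochner_integral_trig_sum_gw_echar[OF assms, of c s]]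
  show ?thesis
    unfolding eq by (simp only:)
qed

lemma integrable_growth_mult_gw_hat_sums:
  fixes a b :: "real^2 \<Rightarrow> complex" and m :: "(real^2) \<times> (real^2) \<Rightarrow> complex"
  assumes "m \<in> borel_measurable borel" and "\<And>p. norm (m p) \<le> C * exp (norm p)"
    and "\<delta>1 > 0" and "\<delta>2 > 0"
  shows "integrable lborel (\<lambda>\<xi>. m \<xi> * (\<Sum>k\<in>K1. a k * complex_of_real (gw_hat \<delta>1 (fst \<xi> - k)))
                                     * (\<Sum>k\<in>K2. b k * complex_of_real (gw_hat \<delta>2 (snd \<xi> - k))))"
proof -
  have "integrable lborel
      (\<lambda>\<xi>. m \<xi> * 1 * complex_of_real (gw_hat \<delta>1 (fst \<xi> - n1) * gw_hat \<delta>2 (snd \<xi> - n2)))" for n1 n2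
    using assms by (intro integrable_growth_mult_gw_hat[where B = 1]) simp_all
  then have "integrable lborel (\<lambda>\<xi>. \<Sum>n1\<in>K1. \<Sum>n2\<in>K2. (a n1 * b n2) *
      (m \<xi> * 1 * complex_of_real (gw_hat \<delta>1 (fst \<xi> - n1) * gw_hat \<delta>2 (snd \<xi> - n2))))"
    by (intro Bochner_Integration.integrable_sum integrable_mult_right)
  then show ?thesis
    by (simp add: sum_distrib_left sum_distrib_right mult_ac)
qed

lemma integral_smoothed_form_trig_sum:
  fixes a b c :: "real^2 \<Rightarrow> complex" and m :: "(real^2) \<times> (real^2) \<Rightarrow> complex"
  assumes K: "finite K1" "finite K2" "finite K3"
    and m_meas: "m \<in> borel_measurable borel" and growth: "\<And>p. norm (m p) \<le> C * exp (norm p)"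
    and \<delta>: "\<delta>1 > 0" "\<delta>2 > 0" "\<delta>3 > 0"
  shows "(LINT x|lborel. bilin_mult m (\<lambda>y. (\<Sum>k\<in>K1. a k * echar (k \<bullet> y)) * gw \<delta>1 y)
                                       (\<lambda>y. (\<Sum>k\<in>K2. b k * echar (k \<bullet> y)) * gw \<delta>2 y) x
                        * cnj (\<Sum>k\<in>K3. c k * echar (k \<bullet> x)) * gw \<delta>3 x)
       = (\<Sum>n1\<in>K1. \<Sum>n2\<in>K2. \<Sum>k3\<in>K3. a n1 * b n2 * cnj (c k3) * gauss_coeff m \<delta>1 \<delta>2 \<delta>3 n1 n2 k3)"
proof -
  define A where "A \<xi> = (\<Sum>k\<in>K1. a k * complex_of_real (gw_hat \<delta>1 (\<xi> - k)))" for \<xi>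
  define B where "B \<xi> = (\<Sum>k\<in>K2. b k * complex_of_real (gw_hat \<delta>2 (\<xi> - k)))" for \<xi>
  define H where "H \<xi> = m \<xi> * A (fst \<xi>) * B (snd \<xi>)" for \<xi>
  define h where "h x = cnj (\<Sum>k\<in>K3. c k * echar (k \<bullet> x)) * gw \<delta>3 x" for x
  let ?g = "\<lambda>n1 n2 k3 \<xi>. m \<xi> * complex_of_real
              (gw_hat \<delta>1 (fst \<xi> - n1) * gw_hat \<delta>2 (snd \<xi> - n2) * gw_hat \<delta>3 (fst \<xi> + snd \<xi> - k3))"
  have H_int: "integrable lborel H"
    unfolding H_def A_def B_def by (rule integrable_growth_mult_gw_hat_sums[OF m_meas growth \<delta>(1,2)])
  have inner: "has_bochner_integral lborel (\<lambda>x. echar (s \<bullet> x) * h x)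
      (\<Sum>k\<in>K3. cnj (c k) * complex_of_real (gw_hat \<delta>3 (s - k)))" for s
    unfolding h_def by (rule has_bochner_integral_echar_cnj_trig_sum_gw[OF K(3) \<delta>(3)])
  have h_int: "integrable lborel h"
    using inner[of 0] by (simp add: has_bochner_integral_iff)
  have fourier_A: "fourierR (\<lambda>y. (\<Sum>k\<in>K1. a k * echar (k \<bullet> y)) * gw \<delta>1 y) = A"
    using K \<delta> by (simp add: fun_eq_iff A_def fourierR_trig_sum_gw)
  have fourier_B: "fourierR (\<lambda>y. (\<Sum>k\<in>K2. b k * echar (k \<bullet> y)) * gw \<delta>2 y) = B"
    using K \<delta> by (simp add: fun_eq_iff B_def fourierR_trig_sum_gw)
  have "H \<xi> * (LINT x|lborel. echar ((fst \<xi> + snd \<xi>) \<bullet> x) * h x)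
      = (\<Sum>n1\<in>K1. \<Sum>n2\<in>K2. \<Sum>k3\<in>K3. a n1 * b n2 * cnj (c k3) * ?g n1 n2 k3 \<xi>)" for \<xi>
    using inner[of "fst \<xi> + snd \<xi>"]
    by (simp add: has_bochner_integral_iff H_def A_def B_def sum_distrib_left sum_distrib_right mult_ac)
  then have "(LINT x|lborel. bilin_mult m (\<lambda>y. (\<Sum>k\<in>K1. a k * echar (k \<bullet> y)) * gw \<delta>1 y)
                                       (\<lambda>y. (\<Sum>k\<in>K2. b k * echar (k \<bullet> y)) * gw \<delta>2 y) x
                        * cnj (\<Sum>k\<in>K3. c k * echar (k \<bullet> x)) * gw \<delta>3 x)
      = (LINT \<xi>|lborel. (\<Sum>n1\<in>K1. \<Sum>n2\<in>K2. \<Sum>k3\<in>K3. a n1 * b n2 * cnj (c k3) * ?g n1 n2 k3 \<xi>))"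
    using integral_pairing_iterated[OF H_int h_int]
    by (simp add: bilin_mult_def fourier_A fourier_B H_def h_def mult.assoc)
  also have "\<dots> = (\<Sum>n1\<in>K1. \<Sum>n2\<in>K2. \<Sum>k3\<in>K3. a n1 * b n2 * cnj (c k3) * gauss_coeff m \<delta>1 \<delta>2 \<delta>3 n1 n2 k3)"
    using integrable_gauss_coeff[OF m_meas growth \<delta>]
    by (simp add: gauss_coeff_def Bochner_Integration.integrable_sum)
  finally show ?thesis .
qed

lemma tendsto_smoothed_form_trig_sum:
  fixes a b c :: "real^2 \<Rightarrow> complex" and m :: "(real^2) \<times> (real^2) \<Rightarrow> complex"
  assumes K: "finite K1" "K1 \<subseteq> Zsq" "finite K2" "K2 \<subseteq> Zsq" "finite K3"
    and m_meas: "m \<in> borel_measurable borel"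
    and cont: "\<And>k1 k2. k1 \<in> Zsq \<Longrightarrow> k2 \<in> Zsq \<Longrightarrow> isCont m (k1, k2)"
    and growth: "\<And>p. norm (m p) \<le> C * exp (norm p)"
    and pos: "\<alpha> > 0" "\<beta> > 0" "\<gamma> > 0" and sum_1: "\<alpha> + \<beta> + \<gamma> = 1"
  shows "((\<lambda>\<epsilon>. complex_of_real \<epsilon> *
            (LINT x|lborel. bilin_mult m (\<lambda>y. (\<Sum>k\<in>K1. a k * echar (k \<bullet> y)) * gw (\<alpha> * \<epsilon>) y)
                                         (\<lambda>y. (\<Sum>k\<in>K2. b k * echar (k \<bullet> y)) * gw (\<beta> * \<epsilon>) y) x
                            * cnj (\<Sum>k\<in>K3. c k * echar (k \<bullet> x)) * gw (\<gamma> * \<epsilon>) x))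
          \<longlongrightarrow> (\<Sum>n1\<in>K1. \<Sum>n2\<in>K2. \<Sum>k3\<in>K3.
                a n1 * b n2 * cnj (c k3) * (if k3 = n1 + n2 then m (n1, n2) else 0))) (at_right 0)"
proof -
  let ?S = "\<lambda>\<epsilon>. \<Sum>n1\<in>K1. \<Sum>n2\<in>K2. \<Sum>k3\<in>K3.
              a n1 * b n2 * cnj (c k3) * (complex_of_real \<epsilon> * gauss_coeff m (\<alpha> * \<epsilon>) (\<beta> * \<epsilon>) (\<gamma> * \<epsilon>) n1 n2 k3)"
  have "(?S \<longlongrightarrow> (\<Sum>n1\<in>K1. \<Sum>n2\<in>K2. \<Sum>k3\<in>K3.
          a n1 * b n2 * cnj (c k3) * (if k3 = n1 + n2 then m (n1, n2) else 0))) (at_right 0)"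
    using K pos sum_1 by (intro tendsto_sum tendsto_mult_left tendsto_gauss_coeff[OF m_meas cont growth]) auto
  moreover have "\<forall>\<^sub>F \<epsilon> in at_right 0. ?S \<epsilon> = complex_of_real \<epsilon> *
      (LINT x|lborel. bilin_mult m (\<lambda>y. (\<Sum>k\<in>K1. a k * echar (k \<bullet> y)) * gw (\<alpha> * \<epsilon>) y)
                                   (\<lambda>y. (\<Sum>k\<in>K2. b k * echar (k \<bullet> y)) * gw (\<beta> * \<epsilon>) y) x
                      * cnj (\<Sum>k\<in>K3. c k * echar (k \<bullet> x)) * gw (\<gamma> * \<epsilon>) x)"
    using eventually_at_right_less[of "0::real"]
  proof eventually_elim
    case (elim \<epsilon>)
    then show ?case
      using integral_smoothed_form_trig_sum[OF K(1,3,5) m_meas growth, of "\<alpha> * \<epsilon>" "\<beta> * \<epsilon>" "\<gamma> * \<epsilon>" a b c]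
        pos
      by (simp add: sum_distrib_left mult_ac)
  qed
  ultimately show ?thesis
    using tendsto_cong by fastforce
qed

theorem lemma3p4:
  fixes P Q R :: "real^2 \<Rightarrow> complex"
    and m :: "(real^2) \<times> (real^2) \<Rightarrow> complex"
    and \<alpha> \<beta> \<gamma> :: real
  assumes "trig_poly P" and "trig_poly Q" and "trig_poly R"
    and "m \<in> borel_measurable borel"
    and "\<And>k1 k2. k1 \<in> Zsq \<Longrightarrow> k2 \<in> Zsq \<Longrightarrow> isCont m (k1, k2)"
    and "\<exists>C. \<forall>\<xi>1 \<xi>2. norm (m (\<xi>1, \<xi>2)) \<le> C * exp (norm (\<xi>1, \<xi>2))"
    and "\<alpha> > 0" and "\<beta> > 0" and "\<gamma> > 0" and "\<alpha> + \<beta> + \<gamma> = 1"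
  shows "((\<lambda>\<epsilon>. complex_of_real \<epsilon> *
            (LINT x|lborel. bilin_mult m (\<lambda>y. P y * gw (\<alpha> * \<epsilon>) y) (\<lambda>y. Q y * gw (\<beta> * \<epsilon>) y) x
                            * cnj (R x) * gw (\<gamma> * \<epsilon>) x))
          \<longlongrightarrow> (LINT x:cbox (vec (-1/2)) (vec (1/2))|lborel. periodization m P Q x * cnj (R x)))
         (at_right 0)"
proof -
  obtain K1 a where K1: "finite K1" "K1 \<subseteq> Zsq" and P: "P = (\<lambda>x. \<Sum>k\<in>K1. a k * echar (k \<bullet> x))"
    using assms(1) unfolding trig_poly_def fun_eq_iff[symmetric] by blast
  obtain K2 b where K2: "finite K2" "K2 \<subseteq> Zsq" and Q: "Q = (\<lambda>x. \<Sum>k\<in>K2. b k * echar (k \<bullet> x))"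
    using assms(2) unfolding trig_poly_def fun_eq_iff[symmetric] by blast
  obtain K3 c where K3: "finite K3" "K3 \<subseteq> Zsq" and R: "R = (\<lambda>x. \<Sum>k\<in>K3. c k * echar (k \<bullet> x))"
    using assms(3) unfolding trig_poly_def fun_eq_iff[symmetric] by blast
  obtain C where "\<forall>\<xi>1 \<xi>2. norm (m (\<xi>1, \<xi>2)) \<le> C * exp (norm (\<xi>1, \<xi>2))"
    using assms(6) by blast
  then have growth: "norm (m p) \<le> C * exp (norm p)" for p
    by (metis prod.collapse)
  show ?thesis
    unfolding P Q R integral_periodization_trig_sum[OF K1 K2 K3]
    using K1 K2 K3 assms(4,5,7-10) by (intro tendsto_smoothed_form_trig_sum[OF _ _ _ _ _ _ _ growth])
qed

end
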